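(* Let $M$ be a II$_1$-factor (with separable predual) acting standardly on $L^2(M)$, and let $M_k \subset M$ ($k \in \mathbb{N}$) be von Neumann subalgebras. Let $E_k : M \to M_k$ be the unique normal trace-preserving conditional expectation onto $M_k$. Then for every $x \in \liminf_{k\to\infty} M_k$, one has $E_k(x) \to x$ in the strong-$*$ topology.
   Context: For a II$_1$-factor $M$ with unique tracial state $\tau$, $L^2(M)$ is the GNS space of $\tau$ and $M \subset B(L^2(M))$ is the GNS (standard) representation. For von Neumann subalgebras $M_k \subset B(H)$, define $\liminf_{k\to\infty} M_k = \{x \in B(H) : \exists\, x_k \in M_k \text{ with } x_k \to x \text{ in the strong-}*\text{ topology}\}$. *)

theory Defs
  imports "HOL-Analysis.Analysis"
begin

text \<open>A complex Hilbert space is given on a type 'h (with its additive group structure)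
  by a complex scalar multiplication sm and an inner product ip (linear in the first
  argument, conjugate-linear in the second).\<close>

type_synonym 'h hsp = "(complex \<Rightarrow> 'h \<Rightarrow> 'h) \<times> ('h \<Rightarrow> 'h \<Rightarrow> complex)"

definition hnorm :: "'h hsp \<Rightarrow> 'h \<Rightarrow> real" where
  "hnorm S h = sqrt (Re (snd S h h))"

definition hilbert_space :: "('h::ab_group_add) hsp \<Rightarrow> bool" where
  "hilbert_space S \<longleftrightarrow> (let sm = fst S; ip = snd S in
     (\<forall>h. sm 1 h = h) \<and>
     (\<forall>a b h. sm (a * b) h = sm a (sm b h)) \<and>
     (\<forall>a b h. sm (a + b) h = sm a h + sm b h) \<and>
     (\<forall>a h g. sm a (h + g) = sm a h + sm a g) \<and>
     (\<forall>h g k. ip (h + g) k = ip h k + ip g k) \<and>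
     (\<forall>a h k. ip (sm a h) k = a * ip h k) \<and>
     (\<forall>h k. ip h k = cnj (ip k h)) \<and>
     (\<forall>h. Im (ip h h) = 0 \<and> Re (ip h h) \<ge> 0) \<and>
     (\<forall>h. ip h h = 0 \<longrightarrow> h = 0) \<and>
     (\<forall>X :: nat \<Rightarrow> 'h. (\<forall>e>0. \<exists>N. \<forall>m\<ge>N. \<forall>n\<ge>N. hnorm S (X m - X n) < e)
          \<longrightarrow> (\<exists>l. (\<lambda>n. hnorm S (X n - l)) \<longlonglongrightarrow> 0)))"

definition separable_hs :: "('h::ab_group_add) hsp \<Rightarrow> bool" where
  "separable_hs S \<longleftrightarrow> (\<exists>D. countable D \<and> (\<forall>h. \<forall>e>0. \<exists>d\<in>D. hnorm S (h - d) < e))"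

definition bounded_op :: "('h::ab_group_add) hsp \<Rightarrow> ('h \<Rightarrow> 'h) \<Rightarrow> bool" where
  "bounded_op S x \<longleftrightarrow> (\<forall>h g. x (h + g) = x h + x g) \<and> (\<forall>a h. x (fst S a h) = fst S a (x h))
     \<and> (\<exists>C. \<forall>h. hnorm S (x h) \<le> C * hnorm S h)"

definition adj :: "'h hsp \<Rightarrow> ('h \<Rightarrow> 'h) \<Rightarrow> ('h \<Rightarrow> 'h)" where
  "adj S x = (SOME y. \<forall>h g. snd S (x h) g = snd S h (y g))"

definition op_add :: "('h \<Rightarrow> 'h::ab_group_add) \<Rightarrow> ('h \<Rightarrow> 'h) \<Rightarrow> ('h \<Rightarrow> 'h)" where
  "op_add x y = (\<lambda>h. x h + y h)"

definition op_diff :: "('h \<Rightarrow> 'h::ab_group_add) \<Rightarrow> ('h \<Rightarrow> 'h) \<Rightarrow> ('h \<Rightarrow> 'h)" where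
  "op_diff x y = (\<lambda>h. x h - y h)"

definition op_smult :: "'h hsp \<Rightarrow> complex \<Rightarrow> ('h \<Rightarrow> 'h) \<Rightarrow> ('h \<Rightarrow> 'h)" where
  "op_smult S a x = (\<lambda>h. fst S a (x h))"

definition commutant :: "('h::ab_group_add) hsp \<Rightarrow> ('h \<Rightarrow> 'h) set \<Rightarrow> ('h \<Rightarrow> 'h) set" where
  "commutant S A = {y. bounded_op S y \<and> (\<forall>x\<in>A. x \<circ> y = y \<circ> x)}"

definition vN_algebra :: "('h::ab_group_add) hsp \<Rightarrow> ('h \<Rightarrow> 'h) set \<Rightarrow> bool" where
  "vN_algebra S M \<longleftrightarrow> (\<forall>x\<in>M. bounded_op S x) \<and> id \<in> M \<and>
     (\<forall>x\<in>M. \<forall>y\<in>M. op_add x y \<in> M \<and> x \<circ> y \<in> M) \<and>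
     (\<forall>a. \<forall>x\<in>M. op_smult S a x \<in> M) \<and> (\<forall>x\<in>M. adj S x \<in> M) \<and>
     M = commutant S (commutant S M)"

definition factor :: "('h::ab_group_add) hsp \<Rightarrow> ('h \<Rightarrow> 'h) set \<Rightarrow> bool" where
  "factor S M \<longleftrightarrow> M \<inter> commutant S M = {op_smult S c id | c. True}"

definition op_span :: "'h hsp \<Rightarrow> ('h \<Rightarrow> 'h::ab_group_add) set \<Rightarrow> ('h \<Rightarrow> 'h) set" where
  "op_span S F = {(\<lambda>h. \<Sum>f\<in>F. fst S (c f) (f h)) | c. True}"

definition infinite_dim :: "('h::ab_group_add) hsp \<Rightarrow> ('h \<Rightarrow> 'h) set \<Rightarrow> bool" where
  "infinite_dim S M \<longleftrightarrow> (\<forall>F. finite F \<and> F \<subseteq> M \<longrightarrow> \<not> M \<subseteq> op_span S F)"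

definition positive_op :: "('h::ab_group_add) hsp \<Rightarrow> ('h \<Rightarrow> 'h) \<Rightarrow> bool" where
  "positive_op S x \<longleftrightarrow> bounded_op S x \<and> (\<forall>h. Im (snd S (x h) h) = 0 \<and> Re (snd S (x h) h) \<ge> 0)"

definition self_adjoint :: "('h::ab_group_add) hsp \<Rightarrow> ('h \<Rightarrow> 'h) \<Rightarrow> bool" where
  "self_adjoint S x \<longleftrightarrow> bounded_op S x \<and> adj S x = x"

definition op_le :: "('h::ab_group_add) hsp \<Rightarrow> ('h \<Rightarrow> 'h) \<Rightarrow> ('h \<Rightarrow> 'h) \<Rightarrow> bool" where
  "op_le S x y \<longleftrightarrow> positive_op S (op_diff y x)"

definition is_op_sup :: "('h::ab_group_add) hsp \<Rightarrow> ('h \<Rightarrow> 'h) set \<Rightarrow> ('h \<Rightarrow> 'h) \<Rightarrow> bool" where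
  "is_op_sup S D x \<longleftrightarrow> self_adjoint S x \<and> (\<forall>d\<in>D. op_le S d x) \<and>
     (\<forall>y. self_adjoint S y \<and> (\<forall>d\<in>D. op_le S d y) \<longrightarrow> op_le S x y)"

definition incr_family :: "('h::ab_group_add) hsp \<Rightarrow> ('h \<Rightarrow> 'h) set \<Rightarrow> ('h \<Rightarrow> 'h) set \<Rightarrow> bool" where
  "incr_family S M D \<longleftrightarrow> D \<noteq> {} \<and> D \<subseteq> M \<and> (\<forall>d\<in>D. self_adjoint S d) \<and>
     (\<forall>a\<in>D. \<forall>b\<in>D. \<exists>c\<in>D. op_le S a c \<and> op_le S b c) \<and>
     (\<exists>y. self_adjoint S y \<and> (\<forall>d\<in>D. op_le S d y))"

definition state :: "('h::ab_group_add) hsp \<Rightarrow> ('h \<Rightarrow> 'h) set \<Rightarrow> (('h \<Rightarrow> 'h) \<Rightarrow> complex) \<Rightarrow> bool" where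
  "state S M \<tau> \<longleftrightarrow> (\<forall>x\<in>M. \<forall>y\<in>M. \<tau> (op_add x y) = \<tau> x + \<tau> y) \<and>
     (\<forall>a. \<forall>x\<in>M. \<tau> (op_smult S a x) = a * \<tau> x) \<and>
     (\<forall>x\<in>M. positive_op S x \<longrightarrow> Im (\<tau> x) = 0 \<and> Re (\<tau> x) \<ge> 0) \<and> \<tau> id = 1"

definition tracial :: "('h::ab_group_add) hsp \<Rightarrow> ('h \<Rightarrow> 'h) set \<Rightarrow> (('h \<Rightarrow> 'h) \<Rightarrow> complex) \<Rightarrow> bool" where
  "tracial S M \<tau> \<longleftrightarrow> (\<forall>x\<in>M. \<forall>y\<in>M. \<tau> (x \<circ> y) = \<tau> (y \<circ> x))"

definition faithful :: "('h::ab_group_add) hsp \<Rightarrow> ('h \<Rightarrow> 'h) set \<Rightarrow> (('h \<Rightarrow> 'h) \<Rightarrow> complex) \<Rightarrow> bool" where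
  "faithful S M \<tau> \<longleftrightarrow> (\<forall>x\<in>M. positive_op S x \<and> \<tau> x = 0 \<longrightarrow> x = (\<lambda>h. 0))"

definition normal_functional :: "('h::ab_group_add) hsp \<Rightarrow> ('h \<Rightarrow> 'h) set \<Rightarrow> (('h \<Rightarrow> 'h) \<Rightarrow> complex) \<Rightarrow> bool" where
  "normal_functional S M \<tau> \<longleftrightarrow> (\<forall>D x. incr_family S M D \<and> x \<in> M \<and> is_op_sup S D x \<longrightarrow>
      Re (\<tau> x) = (SUP d\<in>D. Re (\<tau> d)))"

definition normal_map :: "('h::ab_group_add) hsp \<Rightarrow> ('h \<Rightarrow> 'h) set \<Rightarrow> (('h \<Rightarrow> 'h) \<Rightarrow> ('h \<Rightarrow> 'h)) \<Rightarrow> bool" where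
  "normal_map S M E \<longleftrightarrow> (\<forall>D x. incr_family S M D \<and> x \<in> M \<and> is_op_sup S D x \<longrightarrow>
      is_op_sup S (E ` D) (E x))"

definition II1_factor :: "('h::ab_group_add) hsp \<Rightarrow> ('h \<Rightarrow> 'h) set \<Rightarrow> bool" where
  "II1_factor S M \<longleftrightarrow> vN_algebra S M \<and> factor S M \<and> infinite_dim S M \<and>
     (\<exists>\<tau>. state S M \<tau> \<and> tracial S M \<tau> \<and> faithful S M \<tau> \<and> normal_functional S M \<tau>)"

text \<open>M acts standardly, i.e. H is (unitarily) the GNS space L^2(M,tau): there is a unit
  vector xi, cyclic for M, whose vector state is tau.\<close>
definition acts_standardly :: "('h::ab_group_add) hsp \<Rightarrow> ('h \<Rightarrow> 'h) set \<Rightarrow> (('h \<Rightarrow> 'h) \<Rightarrow> complex) \<Rightarrow> bool" where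
  "acts_standardly S M \<tau> \<longleftrightarrow> (\<exists>\<xi>. hnorm S \<xi> = 1 \<and>
      (\<forall>h. \<forall>e>0. \<exists>x\<in>M. hnorm S (x \<xi> - h) < e) \<and>
      (\<forall>x\<in>M. \<tau> x = snd S (x \<xi>) \<xi>))"

definition cond_exp :: "('h::ab_group_add) hsp \<Rightarrow> ('h \<Rightarrow> 'h) set \<Rightarrow> ('h \<Rightarrow> 'h) set \<Rightarrow> (('h \<Rightarrow> 'h) \<Rightarrow> ('h \<Rightarrow> 'h)) \<Rightarrow> bool" where
  "cond_exp S M N E \<longleftrightarrow> (\<forall>x\<in>M. E x \<in> N) \<and> (\<forall>y\<in>N. E y = y) \<and>
     (\<forall>x\<in>M. \<forall>y\<in>M. E (op_add x y) = op_add (E x) (E y)) \<and>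
     (\<forall>a. \<forall>x\<in>M. E (op_smult S a x) = op_smult S a (E x)) \<and>
     (\<forall>x\<in>M. positive_op S x \<longrightarrow> positive_op S (E x)) \<and>
     (\<forall>a\<in>N. \<forall>b\<in>N. \<forall>x\<in>M. E (a \<circ> x \<circ> b) = a \<circ> E x \<circ> b)"

definition trace_preserving :: "('h \<Rightarrow> 'h) set \<Rightarrow> (('h \<Rightarrow> 'h) \<Rightarrow> complex) \<Rightarrow> (('h \<Rightarrow> 'h) \<Rightarrow> ('h \<Rightarrow> 'h)) \<Rightarrow> bool" where
  "trace_preserving M \<tau> E \<longleftrightarrow> (\<forall>x\<in>M. \<tau> (E x) = \<tau> x)"

definition strong_star_lim :: "('h::ab_group_add) hsp \<Rightarrow> (nat \<Rightarrow> ('h \<Rightarrow> 'h)) \<Rightarrow> ('h \<Rightarrow> 'h) \<Rightarrow> bool" where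
  "strong_star_lim S X x \<longleftrightarrow> (\<forall>h. (\<lambda>k. hnorm S (X k h - x h)) \<longlonglongrightarrow> 0 \<and>
       (\<lambda>k. hnorm S (adj S (X k) h - adj S x h)) \<longlonglongrightarrow> 0)"

definition liminf_alg :: "('h::ab_group_add) hsp \<Rightarrow> (nat \<Rightarrow> ('h \<Rightarrow> 'h) set) \<Rightarrow> ('h \<Rightarrow> 'h) set" where
  "liminf_alg S Ms = {x. bounded_op S x \<and> (\<exists>X. (\<forall>k. X k \<in> Ms k) \<and> strong_star_lim S X x)}"

end

theory Submission
  imports Defs
begin

text \<open>Write \<open>z\<^sub>k = E\<^sub>k(x) - x\<close> and let \<open>\<xi>\<close> be the cyclic trace vector. As a strong limit
  of elements of \<open>M\<close>, \<open>x\<close> lies in the bicommutant \<open>M\<close>. On \<open>L\<^sup>2(M)\<close> each \<open>E\<^sub>k\<close> acts as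
  the orthogonal projection onto \<open>L\<^sup>2(M\<^sub>k)\<close>, so for \<open>x\<^sub>k \<in> M\<^sub>k\<close> tending strongly to \<open>x\<close>
  we get \<open>\<parallel>z\<^sub>k\<xi>\<parallel> \<le> 2\<parallel>(x\<^sub>k - x)\<xi>\<parallel> \<rightarrow> 0\<close>, and by traciality \<open>\<parallel>z\<^sub>k\<^sup>*\<xi>\<parallel> = \<parallel>z\<^sub>k\<xi>\<parallel>\<close>.
  Positivity of \<open>E\<^sub>k\<close> bounds \<open>\<parallel>z\<^sub>k\<parallel>\<close> uniformly, and a uniformly bounded sequence \<open>z\<^sub>k\<close> in
  \<open>M\<close> with \<open>z\<^sub>k\<^sup>*\<xi> \<rightarrow> 0\<close> tends strongly to \<open>0\<close>, because \<open>\<parallel>z\<^sub>k m\<xi>\<parallel> = \<parallel>m\<^sup>* z\<^sub>k\<^sup>* \<xi>\<parallel>\<close>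
  and \<open>M\<xi>\<close> is dense. Applying this to \<open>z\<^sub>k\<close> and to \<open>z\<^sub>k\<^sup>*\<close> gives strong-* convergence.\<close>

section \<open>Complex inner product spaces\<close>

locale hspace =
  fixes sm :: "complex \<Rightarrow> 'h::ab_group_add \<Rightarrow> 'h" and ip :: "'h \<Rightarrow> 'h \<Rightarrow> complex"
  assumes sm_one [simp]: "sm 1 h = h"
    and sm_mult: "sm (a * b) h = sm a (sm b h)"
    and sm_add_left: "sm (a + b) h = sm a h + sm b h"
    and sm_add_right: "sm a (h + g) = sm a h + sm a g"
    and ip_add_left: "ip (h + g) k = ip h k + ip g k"
    and ip_sm_left: "ip (sm a h) k = a * ip h k"
    and ip_cnj: "ip h k = cnj (ip k h)"
    and ip_self_Im: "Im (ip h h) = 0"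
    and ip_self_Re: "Re (ip h h) \<ge> 0"
    and ip_self_eq_0: "ip h h = 0 \<Longrightarrow> h = 0"
    and complete: "\<And>X :: nat \<Rightarrow> 'h. (\<forall>e>0. \<exists>N. \<forall>m\<ge>N. \<forall>n\<ge>N. hnorm (sm, ip) (X m - X n) < e)
          \<Longrightarrow> (\<exists>l. (\<lambda>n. hnorm (sm, ip) (X n - l)) \<longlonglongrightarrow> 0)"
begin

abbreviation nrm :: "'h \<Rightarrow> real" where "nrm \<equiv> hnorm (sm, ip)"

lemma sm_zero_left [simp]: "sm 0 h = 0"
  using sm_add_left[of 0 0 h] by simp

lemma sm_zero_right [simp]: "sm a 0 = 0"
  using sm_add_right[of a 0 0] by simp

lemma sm_minus_right: "sm a (- h) = - sm a h"
  using sm_add_right[of a h "- h"] by (simp add: eq_neg_iff_add_eq_0 add.commute)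

lemma sm_diff_right: "sm a (h - g) = sm a h - sm a g"
  using sm_add_right[of a h "- g"] by (simp add: sm_minus_right)

lemma sm_minus_left: "sm (- a) h = - sm a h"
  using sm_add_left[of a "- a" h] by (simp add: eq_neg_iff_add_eq_0 add.commute)

lemma ip_zero_left [simp]: "ip 0 k = 0"
  using ip_add_left[of 0 0 k] by simp

lemma ip_minus_left: "ip (- h) k = - ip h k"
  using ip_add_left[of h "- h" k] by (simp add: eq_neg_iff_add_eq_0 add.commute)

lemma ip_diff_left: "ip (h - g) k = ip h k - ip g k"
  using ip_add_left[of h "- g" k] by (simp add: ip_minus_left)

lemma ip_add_right: "ip h (g + k) = ip h g + ip h k"
  by (metis complex_cnj_add ip_add_left ip_cnj)

lemma ip_sm_right: "ip h (sm a k) = cnj a * ip h k"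
  by (metis complex_cnj_mult ip_cnj ip_sm_left)

lemma ip_zero_right [simp]: "ip h 0 = 0"
  by (metis complex_cnj_zero ip_cnj ip_zero_left)

lemma ip_minus_right: "ip h (- k) = - ip h k"
  by (metis complex_cnj_minus ip_cnj ip_minus_left)

lemma ip_diff_right: "ip h (g - k) = ip h g - ip h k"
  by (metis complex_cnj_diff ip_cnj ip_diff_left)

lemmas ip_simps = ip_add_left ip_add_right ip_diff_left ip_diff_right ip_minus_left ip_minus_right
  ip_sm_left ip_sm_right

lemma nrm_nonneg [simp]: "nrm h \<ge> 0"
  by (simp add: hnorm_def ip_self_Re)

lemma nrm_sq: "(nrm h)\<^sup>2 = Re (ip h h)"
  by (simp add: hnorm_def ip_self_Re)

lemma ip_self: "ip h h = of_real ((nrm h)\<^sup>2)"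
  by (simp add: nrm_sq complex_eq_iff ip_self_Im)

lemma nrm_eq_0_iff [simp]: "nrm h = 0 \<longleftrightarrow> h = 0"
  by (metis ip_self ip_self_eq_0 ip_zero_left of_real_eq_0_iff zero_eq_power2)

lemma nrm_zero [simp]: "nrm 0 = 0"
  by simp

lemma nrm_pos_iff [simp]: "nrm h > 0 \<longleftrightarrow> h \<noteq> 0"
  using nrm_nonneg[of h] nrm_eq_0_iff[of h] by linarith

lemma nrm_sq_add: "(nrm (h + g))\<^sup>2 = (nrm h)\<^sup>2 + (nrm g)\<^sup>2 + 2 * Re (ip h g)"
  using ip_cnj[of g h] by (simp add: nrm_sq ip_simps)

lemma nrm_sm: "nrm (sm a h) = cmod a * nrm h"
proof -
  have "ip (sm a h) (sm a h) = of_real ((cmod a)\<^sup>2) * ip h h"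
    using complex_norm_square[of a] by (simp add: ip_sm_left ip_sm_right mult.commute)
  then have "(nrm (sm a h))\<^sup>2 = (cmod a * nrm h)\<^sup>2"
    by (simp add: nrm_sq power_mult_distrib)
  then show ?thesis
    by (simp add: power2_eq_iff_nonneg)
qed

lemma nrm_minus: "nrm (- h) = nrm h"
  using nrm_sm[of "-1" h] by (simp add: sm_minus_left)

lemma nrm_minus_commute: "nrm (h - g) = nrm (g - h)"
  by (metis minus_diff_eq nrm_minus)

lemma nrm_sq_sub_component:
  assumes "g \<noteq> 0"
  shows "(nrm (h - sm (ip h g / ip g g) g))\<^sup>2 = (nrm h)\<^sup>2 - (cmod (ip h g))\<^sup>2 / (nrm g)\<^sup>2"
proof -
  define b where "b = (nrm g)\<^sup>2"
  define t where "t = ip h g / ip g g"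
  have gg: "ip g g = of_real b" and b: "b \<noteq> 0"
    using assms by (simp_all add: b_def ip_self)
  have "cnj t * ip h g = of_real ((cmod (ip h g))\<^sup>2 / b)"
    "t * ip g h = of_real ((cmod (ip h g))\<^sup>2 / b)"
    "t * cnj t * ip g g = of_real ((cmod (ip h g))\<^sup>2 / b)"
    using b ip_cnj[of g h] complex_norm_square[of "ip h g"]
    by (simp_all add: t_def gg field_simps power2_eq_square)
  moreover have "ip (h - sm t g) (h - sm t g) = ip h h - cnj t * ip h g - t * ip g h + t * cnj t * ip g g"
    by (simp add: ip_simps algebra_simps)
  ultimately show ?thesis
    by (simp add: nrm_sq b_def flip: t_def)
qed

lemma cauchy_schwarz: "cmod (ip h g) \<le> nrm h * nrm g"
proof (cases "g = 0")
  case False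
  have "(cmod (ip h g))\<^sup>2 / (nrm g)\<^sup>2 \<le> (nrm h)\<^sup>2"
    using nrm_sq_sub_component[OF False, of h] by (metis diff_ge_0_iff_ge zero_le_power2)
  then have "(cmod (ip h g))\<^sup>2 \<le> (nrm h * nrm g)\<^sup>2"
    using False by (simp add: power_mult_distrib pos_divide_le_eq)
  then show ?thesis
    by (simp add: abs_le_square_iff)
qed simp

lemma nrm_triangle: "nrm (h + g) \<le> nrm h + nrm g"
proof -
  have "Re (ip h g) \<le> nrm h * nrm g"
    using cauchy_schwarz[of h g] complex_Re_le_cmod[of "ip h g"] by linarith
  then have "(nrm (h + g))\<^sup>2 \<le> (nrm h + nrm g)\<^sup>2"
    by (simp add: nrm_sq_add power2_sum)
  then show ?thesis
    by (simp add: abs_le_square_iff)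
qed

lemma nrm_diff_triangle: "nrm (h - g) \<le> nrm (h - k) + nrm (k - g)"
  using nrm_triangle[of "h - k" "k - g"] by simp

lemma nrm_diff_le: "nrm (h - g) \<le> nrm h + nrm g"
  using nrm_triangle[of h "- g"] by (simp add: nrm_minus)

lemma parallelogram: "(nrm (h + g))\<^sup>2 + (nrm (h - g))\<^sup>2 = 2 * (nrm h)\<^sup>2 + 2 * (nrm g)\<^sup>2"
  using nrm_sq_add[of h g] nrm_sq_add[of h "- g"] by (simp add: nrm_minus ip_minus_right)

lemma apollonius:
  "(nrm (a - b))\<^sup>2 = 2 * (nrm (u - a))\<^sup>2 + 2 * (nrm (u - b))\<^sup>2 - 4 * (nrm (u - sm (1/2) (a + b)))\<^sup>2"
proof -
  have "(u - a) + (u - b) = sm 2 (u - sm (1/2) (a + b))"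
    using sm_add_left[of 1 1] sm_mult[of 2 "1/2" "a + b"] by (simp add: sm_diff_right)
  then have "nrm ((u - a) + (u - b)) = 2 * nrm (u - sm (1/2) (a + b))"
    by (simp add: nrm_sm)
  moreover have "(u - a) - (u - b) = b - a"
    by simp
  ultimately show ?thesis
    using parallelogram[of "u - a" "u - b"] nrm_minus_commute[of a b] by (simp add: power_mult_distrib)
qed

subsection \<open>Riesz representation\<close>

definition closed_subspace :: "'h set \<Rightarrow> bool" where
  "closed_subspace K \<longleftrightarrow> 0 \<in> K \<and> (\<forall>a\<in>K. \<forall>b\<in>K. a + b \<in> K) \<and> (\<forall>c. \<forall>a\<in>K. sm c a \<in> K) \<and>
     (\<forall>X p. (\<forall>n. X n \<in> K) \<and> (\<lambda>n. nrm (X n - p)) \<longlonglongrightarrow> 0 \<longrightarrow> p \<in> K)"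

lemma minimizing_sequence_converges:
  assumes K: "closed_subspace K" and d_le: "\<And>k. k \<in> K \<Longrightarrow> d \<le> (nrm (u - k))\<^sup>2"
    and ks: "\<And>n. ks n \<in> K" "\<And>n. (nrm (u - ks n))\<^sup>2 < d + e n" and e: "e \<longlonglongrightarrow> 0"
  obtains p where "p \<in> K" "(\<lambda>n. nrm (ks n - p)) \<longlonglongrightarrow> 0"
proof -
  have ks_close: "(nrm (ks m - ks n))\<^sup>2 < 2 * e m + 2 * e n" for m n
  proof -
    have "sm (1/2) (ks m + ks n) \<in> K"
      using K ks(1) by (simp add: closed_subspace_def)
    then show ?thesis
      using apollonius[of "ks m" "ks n" u] d_le ks(2)[of m] ks(2)[of n] by fastforce
  qed
  have "\<exists>p. (\<lambda>n. nrm (ks n - p)) \<longlonglongrightarrow> 0"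
  proof (rule complete, intro allI impI)
    fix \<epsilon> :: real
    assume "\<epsilon> > 0"
    then obtain N where N: "\<And>n. n \<ge> N \<Longrightarrow> e n < \<epsilon>\<^sup>2 / 4"
      using order_tendstoD(2)[OF e, of "\<epsilon>\<^sup>2 / 4"] by (auto simp: eventually_sequentially)
    have "nrm (ks m - ks n) < \<epsilon>" if "m \<ge> N" "n \<ge> N" for m n
    proof -
      have "(nrm (ks m - ks n))\<^sup>2 < \<epsilon>\<^sup>2"
        using ks_close[of m n] N[OF that(1)] N[OF that(2)] by linarith
      then show ?thesis
        using \<open>\<epsilon> > 0\<close> by (simp add: power_less_imp_less_base less_imp_le)
    qed
    then show "\<exists>N. \<forall>m\<ge>N. \<forall>n\<ge>N. nrm (ks m - ks n) < \<epsilon>"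
      by blast
  qed
  moreover have "p \<in> K" if "(\<lambda>n. nrm (ks n - p)) \<longlonglongrightarrow> 0" for p
    using K ks(1) that unfolding closed_subspace_def by blast
  ultimately show ?thesis
    using that by blast
qed

lemma nearest_point_exists:
  assumes K: "closed_subspace K"
  obtains p where "p \<in> K" "\<And>k. k \<in> K \<Longrightarrow> nrm (u - p) \<le> nrm (u - k)"
proof -
  define d where "d = (INF k\<in>K. (nrm (u - k))\<^sup>2)"
  define e :: "nat \<Rightarrow> real" where "e n = inverse (real (Suc n))" for n
  have "0 \<in> K"
    using K by (simp add: closed_subspace_def)
  have bdd: "bdd_below ((\<lambda>k. (nrm (u - k))\<^sup>2) ` K)"
    by (rule bdd_belowI[of _ 0]) auto
  have d_le: "d \<le> (nrm (u - k))\<^sup>2" if "k \<in> K" for k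
    unfolding d_def using bdd that by (rule cINF_lower)
  have "d \<ge> 0"
    unfolding d_def using \<open>0 \<in> K\<close> by (intro cINF_greatest) auto
  have e: "e \<longlonglongrightarrow> 0"
    unfolding e_def using LIMSEQ_inverse_real_of_nat by simp
  have "\<exists>k\<in>K. (nrm (u - k))\<^sup>2 < d + e n" for n
    using cInf_less_iff[OF _ bdd, of "d + e n"] \<open>0 \<in> K\<close> by (auto simp: d_def e_def)
  then obtain ks where ks: "\<And>n. ks n \<in> K" "\<And>n. (nrm (u - ks n))\<^sup>2 < d + e n"
    by metis
  then obtain p where "p \<in> K" and p: "(\<lambda>n. nrm (ks n - p)) \<longlonglongrightarrow> 0"
    using minimizing_sequence_converges[OF K d_le _ _ e] by blast
  have "nrm (u - p) \<le> sqrt d"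
  proof (rule LIMSEQ_le_const)
    show "(\<lambda>n. sqrt (d + e n) + nrm (ks n - p)) \<longlonglongrightarrow> sqrt d"
      using tendsto_add[OF tendsto_real_sqrt[OF tendsto_add[OF tendsto_const e]] p] by simp
    have "nrm (u - ks n) \<le> sqrt (d + e n)" for n
      using ks(2)[of n] by (intro real_le_rsqrt) simp
    then have "nrm (u - p) \<le> sqrt (d + e n) + nrm (ks n - p)" for n
      using nrm_diff_triangle[of u p "ks n"] by (smt (verit))
    then show "\<exists>N. \<forall>n\<ge>N. nrm (u - p) \<le> sqrt (d + e n) + nrm (ks n - p)"
      by blast
  qed
  then have "(nrm (u - p))\<^sup>2 \<le> d"
    using \<open>d \<ge> 0\<close> by (metis nrm_nonneg power_mono real_sqrt_pow2)
  then have "nrm (u - p) \<le> nrm (u - k)" if "k \<in> K" for k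
    using d_le[OF that] by (simp add: power2_le_imp_le)
  with \<open>p \<in> K\<close> show ?thesis
    using that by blast
qed

lemma nearest_point_orthogonal:
  assumes K: "closed_subspace K" and "p \<in> K" and p_min: "\<And>k. k \<in> K \<Longrightarrow> nrm (u - p) \<le> nrm (u - k)"
    and "k \<in> K"
  shows "ip (u - p) k = 0"
proof (cases "k = 0")
  case False
  define t where "t = ip (u - p) k / ip k k"
  have "p + sm t k \<in> K"
    using K \<open>p \<in> K\<close> \<open>k \<in> K\<close> by (simp add: closed_subspace_def)
  then have "(nrm (u - p))\<^sup>2 \<le> (nrm ((u - p) - sm t k))\<^sup>2"
    using p_min by (simp add: power_mono diff_diff_eq)
  then have "(cmod (ip (u - p) k))\<^sup>2 / (nrm k)\<^sup>2 \<le> 0"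
    using nrm_sq_sub_component[OF False, of "u - p"] by (simp add: t_def)
  then show ?thesis
    using False by (simp add: divide_le_0_iff)
qed simp

lemma kernel_closed_subspace:
  assumes add: "\<And>h g. f (h + g) = f h + f g" and hom: "\<And>a h. f (sm a h) = a * f h"
    and bnd: "\<And>h. cmod (f h) \<le> C * nrm h"
  shows "closed_subspace {h. f h = 0}"
  unfolding closed_subspace_def
proof (intro conjI allI impI ballI)
  have f_diff: "f (h - g) = f h - f g" for h g
    using add[of "h - g" g] by simp
  show "0 \<in> {h. f h = 0}"
    using add[of 0 0] by simp
  show "a + b \<in> {h. f h = 0}" "sm c a \<in> {h. f h = 0}" if "a \<in> {h. f h = 0}" "b \<in> {h. f h = 0}" for a b c
    using that by (simp_all add: add hom)
  fix X p
  assume X: "(\<forall>n. X n \<in> {h. f h = 0}) \<and> (\<lambda>n. nrm (X n - p)) \<longlonglongrightarrow> 0"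
  have "cmod (f p) \<le> 0"
  proof (rule LIMSEQ_le_const)
    show "(\<lambda>n. C * nrm (X n - p)) \<longlonglongrightarrow> 0"
      using tendsto_mult_right_zero X by blast
    show "\<exists>N. \<forall>n\<ge>N. cmod (f p) \<le> C * nrm (X n - p)"
    proof (intro exI allI impI)
      fix n
      have "f p = - f (X n - p)"
        using X f_diff[of "X n" p] by simp
      then show "cmod (f p) \<le> C * nrm (X n - p)"
        using bnd[of "X n - p"] by simp
    qed
  qed
  then show "p \<in> {h. f h = 0}"
    by simp
qed

theorem riesz_representation:
  assumes add: "\<And>h g. f (h + g) = f h + f g" and hom: "\<And>a h. f (sm a h) = a * f h"
    and bnd: "\<And>h. cmod (f h) \<le> C * nrm h"
  obtains z where "\<And>h. f h = ip h z"
proof (cases "\<forall>h. f h = 0")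
  case True
  then show ?thesis
    using that[of 0] by simp
next
  case False
  then obtain u where "f u \<noteq> 0"
    by auto
  define K where "K = {h. f h = 0}"
  have K: "closed_subspace K"
    unfolding K_def using add hom bnd by (rule kernel_closed_subspace)
  obtain p where "p \<in> K" and p_min: "\<And>k. k \<in> K \<Longrightarrow> nrm (u - p) \<le> nrm (u - k)"
    using nearest_point_exists[OF K] by blast
  define w where "w = u - p"
  have f_diff: "f (h - g) = f h - f g" for h g
    using add[of "h - g" g] by simp
  have "f w = f u"
    using \<open>p \<in> K\<close> by (simp add: w_def f_diff K_def)
  have "f 0 = 0"
    using add[of 0 0] by simp
  then have "f w \<noteq> 0" "w \<noteq> 0"
    using \<open>f w = f u\<close> \<open>f u \<noteq> 0\<close> by auto
  then have "ip w w \<noteq> 0"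
    using ip_self_eq_0 by blast
  have ip_w: "ip h w = f h / f w * ip w w" for h
  proof -
    have "h - sm (f h / f w) w \<in> K"
      using \<open>f w \<noteq> 0\<close> by (simp add: K_def f_diff hom)
    then have "ip w (h - sm (f h / f w) w) = 0"
      using nearest_point_orthogonal[OF K \<open>p \<in> K\<close> p_min] by (simp add: w_def)
    then have "ip (h - sm (f h / f w) w) w = 0"
      using ip_cnj[of "h - sm (f h / f w) w" w] by simp
    then show ?thesis
      by (simp add: ip_diff_left ip_sm_left)
  qed
  have "f h = ip h (sm (cnj (f w / ip w w)) w)" for h
    using \<open>f w \<noteq> 0\<close> \<open>ip w w \<noteq> 0\<close> by (simp add: ip_sm_right ip_w[of h])
  then show ?thesis
    using that by blast
qed

subsection \<open>Bounded operators and adjoints\<close>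

abbreviation bop :: "('h \<Rightarrow> 'h) \<Rightarrow> bool" where "bop \<equiv> bounded_op (sm, ip)"
abbreviation adjo :: "('h \<Rightarrow> 'h) \<Rightarrow> 'h \<Rightarrow> 'h" where "adjo \<equiv> adj (sm, ip)"

lemma bop_add: "bop x \<Longrightarrow> x (h + g) = x h + x g"
  by (simp add: bounded_op_def)

lemma bop_sm: "bop x \<Longrightarrow> x (sm a h) = sm a (x h)"
  by (simp add: bounded_op_def)

lemma bop_diff: "bop x \<Longrightarrow> x (h - g) = x h - x g"
  using bop_add[of x "h - g" g] by simp

lemma bop_bound:
  assumes "bop x"
  obtains C where "C \<ge> 0" "\<And>h. nrm (x h) \<le> C * nrm h"
proof -
  obtain C where C: "\<And>h. nrm (x h) \<le> C * nrm h"
    using assms by (auto simp: bounded_op_def)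
  have "nrm (x h) \<le> max C 0 * nrm h" for h
    using C[of h] by (meson max.cobounded1 mult_right_mono nrm_nonneg order_trans)
  then show ?thesis
    using that[of "max C 0"] by simp
qed

lemma sm_commute: "sm a (sm b h) = sm b (sm a h)"
  by (metis mult.commute sm_mult)

lemma bop_id: "bop id"
  unfolding bounded_op_def by (auto intro: exI[of _ 1])

lemma bop_op_add:
  assumes "bop a" "bop b"
  shows "bop (op_add a b)"
proof -
  obtain C D where "\<And>h. nrm (a h) \<le> C * nrm h" "\<And>h. nrm (b h) \<le> D * nrm h"
    using assms by (auto simp: bounded_op_def)
  then have "nrm (a h + b h) \<le> (C + D) * nrm h" for h
    using nrm_triangle[of "a h" "b h"] by (smt (verit) distrib_right)
  then show ?thesis
    using assms by (auto simp: bounded_op_def op_add_def sm_add_right)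
qed

lemma bop_op_smult:
  assumes "bop a"
  shows "bop (op_smult (sm, ip) c a)"
proof -
  obtain C where "\<And>h. nrm (a h) \<le> C * nrm h"
    using assms by (auto simp: bounded_op_def)
  then have "nrm (sm c (a h)) \<le> (cmod c * C) * nrm h" for h
    by (simp add: nrm_sm mult.assoc mult_left_mono)
  then show ?thesis
    using assms by (auto simp: bounded_op_def op_smult_def sm_add_right sm_commute)
qed

lemma adj_exists:
  assumes "bop x"
  shows "\<exists>y. \<forall>h g. ip (x h) g = ip h (y g)"
proof -
  obtain C where C: "\<And>h. nrm (x h) \<le> C * nrm h"
    using assms by (auto simp: bounded_op_def)
  have "\<exists>z. \<forall>h. ip (x h) g = ip h z" for g
  proof (rule riesz_representation)
    show "ip (x (h + h')) g = ip (x h) g + ip (x h') g" for h h'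
      using assms by (simp add: bop_add ip_add_left)
    show "ip (x (sm a h)) g = a * ip (x h) g" for a h
      using assms by (simp add: bop_sm ip_sm_left)
    show "cmod (ip (x h) g) \<le> (C * nrm g) * nrm h" for h
      using cauchy_schwarz[of "x h" g] mult_right_mono[OF C[of h] nrm_nonneg[of g]]
      by (simp add: algebra_simps)
  qed blast
  then show ?thesis
    by metis
qed

lemma adj_ip:
  assumes "bop x"
  shows "ip (x h) g = ip h (adjo x g)"
  using someI_ex[OF adj_exists[OF assms]] unfolding adj_def snd_conv by blast

lemma adj_ip_left:
  assumes "bop x"
  shows "ip (adjo x g) h = ip g (x h)"
  by (metis adj_ip assms ip_cnj)

lemma adj_unique:
  assumes y: "\<And>h g. ip (x h) g = ip h (y g)"
  shows "adjo x = y"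
proof
  fix g
  have "\<forall>h g. ip (x h) g = ip h (adjo x g)"
    unfolding adj_def snd_conv by (rule someI[of _ y]) (simp add: y)
  then have "ip (adjo x g - y g) (adjo x g - y g) = 0"
    using y by (simp add: ip_diff_right)
  then show "adjo x g = y g"
    using ip_self_eq_0[of "adjo x g - y g"] by simp
qed

lemma adj_adj: "bop x \<Longrightarrow> adjo (adjo x) = x"
  by (rule adj_unique) (rule adj_ip_left)

lemma adj_comp: "bop a \<Longrightarrow> bop b \<Longrightarrow> adjo (a \<circ> b) = adjo b \<circ> adjo a"
  by (rule adj_unique) (simp add: adj_ip)

lemma adj_diff: "bop a \<Longrightarrow> bop b \<Longrightarrow> adjo (op_diff a b) = op_diff (adjo a) (adjo b)"
  by (rule adj_unique) (simp add: op_diff_def ip_diff_left ip_diff_right adj_ip)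

lemma nrm_adj_le:
  assumes "bop x" "C \<ge> 0" "\<And>h. nrm (x h) \<le> C * nrm h"
  shows "nrm (adjo x h) \<le> C * nrm h"
proof (cases "adjo x h = 0")
  case False
  define u where "u = adjo x h"
  have "(nrm u)\<^sup>2 = Re (ip (x u) h)"
    unfolding nrm_sq u_def adj_ip[OF assms(1)] ..
  also have "\<dots> \<le> nrm (x u) * nrm h"
    using complex_Re_le_cmod cauchy_schwarz order_trans by blast
  also have "\<dots> \<le> (C * nrm u) * nrm h"
    using assms(3) by (simp add: mult_right_mono)
  finally have "nrm u * nrm u \<le> nrm u * (C * nrm h)"
    by (simp add: power2_eq_square algebra_simps)
  then show ?thesis
    using False by (simp add: u_def)
qed (use assms(2) in simp)

lemma polarization:
  assumes add: "\<And>h g. T (h + g) = T h + T g" and hom: "\<And>a h. T (sm a h) = sm a (T h)"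
  shows "4 * ip (T h) g = (ip (T (h + g)) (h + g) - ip (T (h - g)) (h - g))
     + \<i> * (ip (T (h + sm \<i> g)) (h + sm \<i> g) - ip (T (h - sm \<i> g)) (h - sm \<i> g))"
proof -
  have T_diff: "T (h - g) = T h - T g" for h g
    using add[of "h - g" g] by simp
  show ?thesis
    by (simp add: add hom T_diff ip_simps algebra_simps)
qed

lemma ip_le_of_numerical_radius_le:
  assumes add: "\<And>h g. T (h + g) = T h + T g" and hom: "\<And>a h. T (sm a h) = sm a (T h)"
    and num: "\<And>v. cmod (ip (T v) v) \<le> c * (nrm v)\<^sup>2" and "c \<ge> 0"
  shows "cmod (ip (T h) g) \<le> c * (nrm h + nrm g)\<^sup>2"
proof -
  have num': "cmod (ip (T v) v) \<le> c * (nrm h + nrm g)\<^sup>2" if "nrm v \<le> nrm h + nrm g" for v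
    using num[of v] mult_left_mono[OF power_mono[OF that nrm_nonneg, of 2] \<open>c \<ge> 0\<close>] by linarith
  have "nrm (h + g) \<le> nrm h + nrm g" "nrm (h - g) \<le> nrm h + nrm g"
    "nrm (h + sm \<i> g) \<le> nrm h + nrm g" "nrm (h - sm \<i> g) \<le> nrm h + nrm g"
    using nrm_triangle[of h g] nrm_diff_le[of h g] nrm_triangle[of h "sm \<i> g"] nrm_diff_le[of h "sm \<i> g"]
    by (simp_all add: nrm_sm)
  note bounds = this[THEN num']
  have "4 * cmod (ip (T h) g) = cmod (4 * ip (T h) g)"
    by (simp add: norm_mult)
  also have "\<dots> \<le> cmod (ip (T (h + g)) (h + g)) + cmod (ip (T (h - g)) (h - g))
      + (cmod (ip (T (h + sm \<i> g)) (h + sm \<i> g)) + cmod (ip (T (h - sm \<i> g)) (h - sm \<i> g)))"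
    unfolding polarization[OF add hom]
    using norm_triangle_ineq[of "ip (T (h + g)) (h + g) - ip (T (h - g)) (h - g)"
        "\<i> * (ip (T (h + sm \<i> g)) (h + sm \<i> g) - ip (T (h - sm \<i> g)) (h - sm \<i> g))"]
      norm_triangle_ineq4[of "ip (T (h + g)) (h + g)" "ip (T (h - g)) (h - g)"]
      norm_triangle_ineq4[of "ip (T (h + sm \<i> g)) (h + sm \<i> g)" "ip (T (h - sm \<i> g)) (h - sm \<i> g)"]
    by (simp add: norm_mult)
  also have "\<dots> \<le> 4 * (c * (nrm h + nrm g)\<^sup>2)"
    using bounds by linarith
  finally show ?thesis
    by simp
qed

lemma nrm_le_of_numerical_radius_le:
  assumes add: "\<And>h g. T (h + g) = T h + T g" and hom: "\<And>a h. T (sm a h) = sm a (T h)"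
    and num: "\<And>v. cmod (ip (T v) v) \<le> c * (nrm v)\<^sup>2"
  shows "nrm (T h) \<le> 4 * c * nrm h"
proof (cases "T h = 0")
  case True
  then have "h = 0 \<or> c \<ge> 0"
    using num[of h] by (auto simp: zero_le_mult_iff)
  with True show ?thesis
    by auto
next
  case False
  have "h \<noteq> 0"
    using False add[of 0 0] by auto
  have "0 \<le> c * (nrm h)\<^sup>2"
    using num[of h] norm_ge_zero order_trans by blast
  then have "c \<ge> 0"
    using \<open>h \<noteq> 0\<close> by (simp add: zero_le_mult_iff)
  define g where "g = sm (of_real (nrm h / nrm (T h))) (T h)"
  have "nrm g = nrm h"
    using False by (simp add: g_def nrm_sm norm_divide)
  have "ip (T h) g = of_real (nrm h * nrm (T h))"
    using False by (simp add: g_def ip_sm_right ip_self power2_eq_square)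
  then have "nrm h * nrm (T h) \<le> nrm h * (4 * c * nrm h)"
    using ip_le_of_numerical_radius_le[OF add hom num \<open>c \<ge> 0\<close>, of h g] \<open>nrm g = nrm h\<close>
    by (simp add: power2_eq_square algebra_simps norm_mult)
  then show ?thesis
    using \<open>h \<noteq> 0\<close> by simp
qed

subsection \<open>Von Neumann algebras and conditional expectations\<close>

abbreviation vN :: "('h \<Rightarrow> 'h) set \<Rightarrow> bool" where "vN \<equiv> vN_algebra (sm, ip)"

lemma vN_bop: "vN A \<Longrightarrow> a \<in> A \<Longrightarrow> bop a"
  by (simp add: vN_algebra_def)

lemma vN_id: "vN A \<Longrightarrow> id \<in> A"
  by (simp add: vN_algebra_def)

lemma vN_add: "vN A \<Longrightarrow> a \<in> A \<Longrightarrow> b \<in> A \<Longrightarrow> op_add a b \<in> A"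
  by (simp add: vN_algebra_def)

lemma vN_comp: "vN A \<Longrightarrow> a \<in> A \<Longrightarrow> b \<in> A \<Longrightarrow> a \<circ> b \<in> A"
  by (simp add: vN_algebra_def)

lemma vN_smult: "vN A \<Longrightarrow> a \<in> A \<Longrightarrow> op_smult (sm, ip) c a \<in> A"
  by (simp add: vN_algebra_def)

lemma vN_adj: "vN A \<Longrightarrow> a \<in> A \<Longrightarrow> adjo a \<in> A"
  by (simp add: vN_algebra_def)

lemma op_diff_eq_add_smult: "op_diff a b = op_add a (op_smult (sm, ip) (-1) b)"
  by (simp add: op_diff_def op_add_def op_smult_def fun_eq_iff sm_minus_left)

lemma vN_diff: "vN A \<Longrightarrow> a \<in> A \<Longrightarrow> b \<in> A \<Longrightarrow> op_diff a b \<in> A"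
  unfolding op_diff_eq_add_smult by (intro vN_add vN_smult)

text \<open>Strong limits of elements of \<open>A\<close> commute with the commutant of \<open>A\<close>.\<close>
lemma vN_strong_limit:
  assumes "vN A" "bop x" "\<And>k. X k \<in> A" and lim: "\<And>h. (\<lambda>k. nrm (X k h - x h)) \<longlonglongrightarrow> 0"
  shows "x \<in> A"
proof -
  have "y \<circ> x = x \<circ> y" if y: "y \<in> commutant (sm, ip) A" for y
  proof
    fix h
    have "bop y" and y_comm: "\<And>a. a \<in> A \<Longrightarrow> a \<circ> y = y \<circ> a"
      using y by (auto simp: commutant_def)
    obtain C where C: "\<And>h. nrm (y h) \<le> C * nrm h"
      using bop_bound[OF \<open>bop y\<close>] by blast
    have "nrm (y (x h) - x (y h)) \<le> 0"
    proof (rule LIMSEQ_le_const)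
      show "(\<lambda>k. C * nrm (X k h - x h) + nrm (X k (y h) - x (y h))) \<longlonglongrightarrow> 0"
        using tendsto_add[OF tendsto_mult_right_zero[OF lim[of h]] lim[of "y h"]] by simp
      have "nrm (y (x h) - x (y h)) \<le> C * nrm (X k h - x h) + nrm (X k (y h) - x (y h))" for k
      proof -
        have "y (X k h) = X k (y h)"
          using y_comm[OF assms(3)] by (metis comp_apply)
        then have "y (x h) - x (y h) = y (x h - X k h) + (X k (y h) - x (y h))"
          by (simp add: bop_diff[OF \<open>bop y\<close>])
        then show ?thesis
          using nrm_triangle[of "y (x h - X k h)"] C[of "x h - X k h"] nrm_minus_commute[of "x h"]
          by (smt (verit))
      qed
      then show "\<exists>N. \<forall>k\<ge>N. nrm (y (x h) - x (y h)) \<le> C * nrm (X k h - x h) + nrm (X k (y h) - x (y h))"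
        by blast
    qed
    then show "(y \<circ> x) h = (x \<circ> y) h"
      using nrm_nonneg[of "y (x h) - x (y h)"] by simp
  qed
  then have "x \<in> commutant (sm, ip) (commutant (sm, ip) A)"
    using \<open>bop x\<close> by (auto simp: commutant_def[of _ "commutant (sm, ip) A"])
  then show ?thesis
    using \<open>vN A\<close> by (simp add: vN_algebra_def)
qed

abbreviation cexp :: "('h \<Rightarrow> 'h) set \<Rightarrow> ('h \<Rightarrow> 'h) set \<Rightarrow> (('h \<Rightarrow> 'h) \<Rightarrow> 'h \<Rightarrow> 'h) \<Rightarrow> bool"
  where "cexp \<equiv> cond_exp (sm, ip)"

lemma cond_exp_in: "cexp M N E \<Longrightarrow> x \<in> M \<Longrightarrow> E x \<in> N"
  by (simp add: cond_exp_def)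

lemma cond_exp_fix: "cexp M N E \<Longrightarrow> y \<in> N \<Longrightarrow> E y = y"
  by (simp add: cond_exp_def)

lemma cond_exp_add: "cexp M N E \<Longrightarrow> a \<in> M \<Longrightarrow> b \<in> M \<Longrightarrow> E (op_add a b) = op_add (E a) (E b)"
  by (simp add: cond_exp_def)

lemma cond_exp_smult: "cexp M N E \<Longrightarrow> a \<in> M \<Longrightarrow> E (op_smult (sm, ip) c a) = op_smult (sm, ip) c (E a)"
  by (simp add: cond_exp_def)

lemma cond_exp_positive: "cexp M N E \<Longrightarrow> a \<in> M \<Longrightarrow> positive_op (sm, ip) a \<Longrightarrow> positive_op (sm, ip) (E a)"
  by (simp add: cond_exp_def)

lemma cond_exp_bimodule: "cexp M N E \<Longrightarrow> a \<in> N \<Longrightarrow> b \<in> N \<Longrightarrow> y \<in> M \<Longrightarrow> E (a \<circ> y \<circ> b) = a \<circ> E y \<circ> b"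
  by (simp add: cond_exp_def)

lemma cond_exp_diff:
  assumes "vN M" "cexp M N E" "a \<in> M" "b \<in> M"
  shows "E (op_diff a b) = op_diff (E a) (E b)"
  using assms by (simp add: op_diff_eq_add_smult cond_exp_add cond_exp_smult vN_smult)

definition numerical_range_real_bounded :: "('h \<Rightarrow> 'h) \<Rightarrow> real \<Rightarrow> bool" where
  "numerical_range_real_bounded a c \<longleftrightarrow> (\<forall>h. Im (ip (a h) h) = 0 \<and> \<bar>Re (ip (a h) h)\<bar> \<le> c * (nrm h)\<^sup>2)"

lemma numerical_range_real_bounded_iff_positive:
  assumes "bop a"
  shows "numerical_range_real_bounded a c \<longleftrightarrow>
    (\<forall>t\<in>{-1, 1}. positive_op (sm, ip) (op_add (op_smult (sm, ip) (of_real c) id) (op_smult (sm, ip) t a)))"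
proof -
  let ?p = "\<lambda>t. op_add (op_smult (sm, ip) (of_real c) id) (op_smult (sm, ip) t a)"
  have "bop (?p t)" for t
    using assms by (intro bop_op_add bop_op_smult bop_id)
  moreover have "ip (?p t h) h = of_real (c * (nrm h)\<^sup>2) + t * ip (a h) h" for t h
    by (simp add: op_add_def op_smult_def ip_simps ip_self)
  then have "(Im (ip (a h) h) = 0 \<and> \<bar>Re (ip (a h) h)\<bar> \<le> c * (nrm h)\<^sup>2) \<longleftrightarrow>
      (\<forall>t\<in>{-1, 1}. Im (ip (?p t h) h) = 0 \<and> Re (ip (?p t h) h) \<ge> 0)" for h
    by (auto simp: abs_le_iff)
  ultimately show ?thesis
    unfolding numerical_range_real_bounded_def positive_op_def snd_conv by blast
qed

lemma numerical_range_real_bounded_cmod: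
  "numerical_range_real_bounded a c \<Longrightarrow> cmod (ip (a h) h) \<le> c * (nrm h)\<^sup>2"
  by (simp add: numerical_range_real_bounded_def cmod_eq_Re)

lemma cond_exp_numerical_range_real_bounded:
  assumes "vN M" "vN N" "cexp M N E" "a \<in> M" and a: "numerical_range_real_bounded a c"
  shows "numerical_range_real_bounded (E a) c"
proof -
  let ?p = "\<lambda>t b. op_add (op_smult (sm, ip) (of_real c) id) (op_smult (sm, ip) t b)"
  have "?p t a \<in> M" for t
    using assms by (intro vN_add vN_smult vN_id)
  moreover have "E id = id"
    using cond_exp_fix[OF \<open>cexp M N E\<close> vN_id[OF \<open>vN N\<close>]] .
  then have "E (?p t a) = ?p t (E a)" for t
    using assms by (simp add: cond_exp_add cond_exp_smult vN_smult vN_id)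
  moreover have "\<forall>t\<in>{-1, 1}. positive_op (sm, ip) (?p t a)"
    using a numerical_range_real_bounded_iff_positive vN_bop assms by blast
  ultimately have "\<forall>t\<in>{-1, 1}. positive_op (sm, ip) (?p t (E a))"
    using cond_exp_positive[OF \<open>cexp M N E\<close>] by metis
  then show ?thesis
    using numerical_range_real_bounded_iff_positive vN_bop cond_exp_in assms by blast
qed

lemma cond_exp_numerical_radius_le:
  assumes "vN M" "vN N" "cexp M N E" and "x \<in> M" and x: "\<And>h. nrm (x h) \<le> C * nrm h"
  shows "cmod (ip (E x v) v) \<le> 2 * C * (nrm v)\<^sup>2"
proof -
  have "bop x" "adjo x \<in> M"
    using assms by (simp_all add: vN_bop vN_adj)
  have x_adj: "ip (adjo x v) v = cnj (ip (x v) v)" for v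
    using adj_ip_left[OF \<open>bop x\<close>] ip_cnj by metis
  define a where "a = op_smult (sm, ip) (1/2) (op_add x (adjo x))"
  define b where "b = op_smult (sm, ip) (- \<i> / 2) (op_diff x (adjo x))"
  have "a \<in> M" "b \<in> M"
    using assms \<open>adjo x \<in> M\<close> by (simp_all add: a_def b_def vN_smult vN_add vN_diff)
  have "ip (a v) v = of_real (Re (ip (x v) v))" "ip (b v) v = of_real (Im (ip (x v) v))" for v
    by (simp_all add: a_def b_def op_smult_def op_add_def op_diff_def ip_simps x_adj
        complex_add_cnj complex_eq_iff)
  moreover have "cmod (ip (x v) v) \<le> C * (nrm v)\<^sup>2" for v
    using cauchy_schwarz[of "x v" v] mult_right_mono[OF x[of v] nrm_nonneg[of v]]
    by (simp add: power2_eq_square mult.assoc)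
  ultimately have "numerical_range_real_bounded a C" "numerical_range_real_bounded b C"
    unfolding numerical_range_real_bounded_def
    by (metis Im_complex_of_real Re_complex_of_real abs_Re_le_cmod abs_Im_le_cmod order_trans)+
  then have Ea: "numerical_range_real_bounded (E a) C" and Eb: "numerical_range_real_bounded (E b) C"
    using cond_exp_numerical_range_real_bounded assms \<open>a \<in> M\<close> \<open>b \<in> M\<close> by blast+
  have "E a = op_smult (sm, ip) (1/2) (op_add (E x) (E (adjo x)))"
    "E b = op_smult (sm, ip) (- \<i> / 2) (op_diff (E x) (E (adjo x)))"
    using assms \<open>adjo x \<in> M\<close> by (simp_all add: a_def b_def cond_exp_smult cond_exp_add
        cond_exp_diff vN_add vN_diff)
  then have "ip (E x v) v = ip (E a v) v + \<i> * ip (E b v) v" for v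
    by (simp add: op_smult_def op_add_def op_diff_def ip_simps algebra_simps)
  then have tri: "cmod (ip (E x v) v) \<le> cmod (ip (E a v) v) + cmod (ip (E b v) v)" for v
    using norm_triangle_ineq[of "ip (E a v) v" "\<i> * ip (E b v) v"] by (simp add: norm_mult)
  show ?thesis
    using tri[of v] numerical_range_real_bounded_cmod[OF Ea, of v] numerical_range_real_bounded_cmod[OF Eb, of v]
    by linarith
qed

text \<open>Tomiyama's theorem would give the constant 1; positivity alone gives 8, which suffices.\<close>
lemma cond_exp_nrm_le:
  assumes "vN M" "vN N" "cexp M N E" and "x \<in> M" and "\<And>h. nrm (x h) \<le> C * nrm h"
  shows "nrm (E x h) \<le> 8 * C * nrm h"
proof -
  have "bop (E x)"
    using assms by (simp add: vN_bop cond_exp_in)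
  then show ?thesis
    using nrm_le_of_numerical_radius_le[of "E x" "2 * C"] cond_exp_numerical_radius_le[OF assms]
    by (simp add: bop_add bop_sm)
qed

end

section \<open>Algebras in standard form\<close>

locale standard_form = hspace sm ip for sm :: "complex \<Rightarrow> 'h::ab_group_add \<Rightarrow> 'h" and ip +
  fixes M :: "('h \<Rightarrow> 'h) set" and \<tau> :: "('h \<Rightarrow> 'h) \<Rightarrow> complex" and \<xi> :: 'h
  assumes vN_M: "vN M"
    and tracial: "tracial (sm, ip) M \<tau>"
    and trace_eq_vector_state: "\<And>m. m \<in> M \<Longrightarrow> \<tau> m = ip (m \<xi>) \<xi>"
    and cyclic: "\<And>h e. e > 0 \<Longrightarrow> \<exists>m\<in>M. nrm (m \<xi> - h) < e"
begin

lemma nrm_adj_cyclic: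
  assumes "b \<in> M"
  shows "nrm (adjo b \<xi>) = nrm (b \<xi>)"
proof -
  have "bop b" "adjo b \<in> M"
    using assms vN_M by (simp_all add: vN_bop vN_adj)
  then have "\<tau> (b \<circ> adjo b) = \<tau> (adjo b \<circ> b)"
    using tracial assms by (simp add: tracial_def)
  then have "ip (b (adjo b \<xi>)) \<xi> = ip (adjo b (b \<xi>)) \<xi>"
    using trace_eq_vector_state vN_comp[OF vN_M] assms \<open>adjo b \<in> M\<close> by simp
  then have "ip (adjo b \<xi>) (adjo b \<xi>) = ip (b \<xi>) (b \<xi>)"
    by (simp add: adj_ip_left[OF \<open>bop b\<close>] adj_ip[OF \<open>bop b\<close>])
  then show ?thesis
    by (simp add: hnorm_def)
qed

text \<open>By traciality \<open>\<parallel>Z\<^sub>k m\<xi>\<parallel> = \<parallel>m\<^sup>* Z\<^sub>k\<^sup>* \<xi>\<parallel> \<le> \<parallel>m\<parallel> \<parallel>Z\<^sub>k\<^sup>* \<xi>\<parallel>\<close>; the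
  uniform bound on the \<open>Z\<^sub>k\<close> extends the convergence from the dense set \<open>M\<xi>\<close> to all vectors.\<close>
lemma tendsto_zero_of_adj_cyclic:
  assumes Z: "\<And>k. Z k \<in> M" and "C \<ge> 0" and Z_bound: "\<And>k h. nrm (Z k h) \<le> C * nrm h"
    and lim: "(\<lambda>k. nrm (adjo (Z k) \<xi>)) \<longlonglongrightarrow> 0"
  shows "(\<lambda>k. nrm (Z k h)) \<longlonglongrightarrow> 0"
  unfolding LIMSEQ_iff
proof (intro allI impI)
  fix \<epsilon> :: real
  assume "\<epsilon> > 0"
  moreover have "\<epsilon> / (2 * (C + 1)) > 0"
    using \<open>\<epsilon> > 0\<close> \<open>C \<ge> 0\<close> by simp
  ultimately obtain m where "m \<in> M" and m: "nrm (m \<xi> - h) < \<epsilon> / (2 * (C + 1))"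
    using cyclic by blast
  then have "bop m"
    using vN_M by (simp add: vN_bop)
  then obtain D where "D \<ge> 0" and D: "\<And>h. nrm (m h) \<le> D * nrm h"
    using bop_bound by blast
  have "\<epsilon> / (2 * (D + 1)) > 0"
    using \<open>\<epsilon> > 0\<close> \<open>D \<ge> 0\<close> by simp
  then obtain N where N: "\<And>k. k \<ge> N \<Longrightarrow> nrm (adjo (Z k) \<xi>) < \<epsilon> / (2 * (D + 1))"
    using order_tendstoD(2)[OF lim] by (auto simp: eventually_sequentially)
  have "nrm (Z k h) < \<epsilon>" if "k \<ge> N" for k
  proof -
    have "bop (Z k)" "Z k \<circ> m \<in> M"
      using vN_M Z \<open>m \<in> M\<close> by (simp_all add: vN_bop vN_comp)
    have "nrm (Z k (m \<xi>)) = nrm (adjo m (adjo (Z k) \<xi>))"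
      using nrm_adj_cyclic[OF \<open>Z k \<circ> m \<in> M\<close>] by (simp add: adj_comp[OF \<open>bop (Z k)\<close> \<open>bop m\<close>])
    also have "\<dots> \<le> D * nrm (adjo (Z k) \<xi>)"
      by (rule nrm_adj_le[OF \<open>bop m\<close> \<open>D \<ge> 0\<close> D])
    also have "\<dots> \<le> D * (\<epsilon> / (2 * (D + 1)))"
      using N[OF that] \<open>D \<ge> 0\<close> by (intro mult_left_mono) auto
    also have "\<dots> \<le> \<epsilon> / 2"
      using \<open>D \<ge> 0\<close> \<open>\<epsilon> > 0\<close> by (simp add: field_simps)
    finally have "nrm (Z k (m \<xi>)) \<le> \<epsilon> / 2" .
    moreover have "nrm (Z k h - Z k (m \<xi>)) < \<epsilon> / 2"
    proof -
      have "nrm (Z k h - Z k (m \<xi>)) \<le> C * nrm (m \<xi> - h)"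
        using Z_bound[of k "h - m \<xi>"] nrm_minus_commute[of h] by (simp add: bop_diff[OF \<open>bop (Z k)\<close>])
      also have "\<dots> \<le> C * (\<epsilon> / (2 * (C + 1)))"
        using m \<open>C \<ge> 0\<close> by (intro mult_left_mono) auto
      also have "\<dots> < \<epsilon> / 2"
        using \<open>C \<ge> 0\<close> \<open>\<epsilon> > 0\<close> by (simp add: field_simps)
      finally show ?thesis .
    qed
    ultimately show ?thesis
      using nrm_diff_triangle[of "Z k h" 0 "Z k (m \<xi>)"] by (simp add: nrm_minus)
  qed
  then show "\<exists>N. \<forall>k\<ge>N. norm (nrm (Z k h) - 0) < \<epsilon>"
    by auto
qed

text \<open>\<open>E\<close> is the orthogonal projection of \<open>L\<^sup>2(M)\<close> onto \<open>L\<^sup>2(N)\<close>: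
  \<open>\<parallel>E(y)\<xi>\<parallel>\<^sup>2 = \<tau>(E(y)\<^sup>* E(y)) = \<tau>(E(E(y)\<^sup>* y)) = \<tau>(E(y)\<^sup>* y) = \<langle>y\<xi>, E(y)\<xi>\<rangle>\<close>.\<close>
lemma cond_exp_nrm_cyclic_le:
  assumes "vN N" "N \<subseteq> M" and ce: "cexp M N E" and "trace_preserving M \<tau> E" and "y \<in> M"
  shows "nrm (E y \<xi>) \<le> nrm (y \<xi>)"
proof -
  define e where "e = E y"
  have "e \<in> N"
    unfolding e_def using ce \<open>y \<in> M\<close> by (rule cond_exp_in)
  then have "bop e" "adjo e \<in> N"
    using \<open>vN N\<close> by (simp_all add: vN_bop vN_adj)
  have "adjo e \<circ> y \<circ> id \<in> M" "adjo e \<circ> e \<circ> id \<in> M"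
    using vN_M \<open>adjo e \<in> N\<close> \<open>e \<in> N\<close> \<open>y \<in> M\<close> \<open>N \<subseteq> M\<close>
    by (simp_all add: subsetD vN_comp vN_id)
  moreover have "E (adjo e \<circ> y \<circ> id) = adjo e \<circ> e \<circ> id"
    using cond_exp_bimodule[OF ce \<open>adjo e \<in> N\<close> vN_id[OF \<open>vN N\<close>] \<open>y \<in> M\<close>] by (simp add: e_def)
  ultimately have "\<tau> (adjo e \<circ> e \<circ> id) = \<tau> (adjo e \<circ> y \<circ> id)"
    using \<open>trace_preserving M \<tau> E\<close> unfolding trace_preserving_def by metis
  then have "ip (adjo e (e \<xi>)) \<xi> = ip (adjo e (y \<xi>)) \<xi>"
    using trace_eq_vector_state \<open>adjo e \<circ> y \<circ> id \<in> M\<close> \<open>adjo e \<circ> e \<circ> id \<in> M\<close> by simp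
  then have "ip (e \<xi>) (e \<xi>) = ip (y \<xi>) (e \<xi>)"
    by (simp add: adj_ip_left[OF \<open>bop e\<close>])
  then have "(nrm (e \<xi>))\<^sup>2 = Re (ip (y \<xi>) (e \<xi>))"
    by (simp add: nrm_sq)
  then have "nrm (e \<xi>) * nrm (e \<xi>) \<le> nrm (y \<xi>) * nrm (e \<xi>)"
    using complex_Re_le_cmod[of "ip (y \<xi>) (e \<xi>)"] cauchy_schwarz[of "y \<xi>" "e \<xi>"]
    by (simp add: power2_eq_square)
  then show ?thesis
    unfolding e_def[symmetric] by (cases "e \<xi> = 0") auto
qed

lemma cond_exp_cyclic_approx:
  assumes "vN N" "N \<subseteq> M" "cexp M N E" "trace_preserving M \<tau> E" "x \<in> M" "y \<in> N"
  shows "nrm (E x \<xi> - x \<xi>) \<le> 2 * nrm (y \<xi> - x \<xi>)"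
proof -
  define w where "w = op_diff x y"
  have "w \<in> M"
    using assms vN_M by (auto simp: w_def intro: vN_diff)
  have "E w = op_diff (E x) y"
    using assms vN_M by (simp add: w_def cond_exp_diff cond_exp_fix subsetD)
  then have "E x \<xi> - x \<xi> = E w \<xi> - w \<xi>"
    by (simp add: w_def op_diff_def)
  also have "nrm \<dots> \<le> 2 * nrm (w \<xi>)"
    using nrm_diff_le[of "E w \<xi>" "w \<xi>"] cond_exp_nrm_cyclic_le[OF assms(1-4) \<open>w \<in> M\<close>] by simp
  finally show ?thesis
    by (simp add: w_def op_diff_def nrm_minus_commute)
qed

lemma liminf_alg_subset:
  assumes "\<And>k. Ms k \<subseteq> M"
  shows "liminf_alg (sm, ip) Ms \<subseteq> M"
proof
  fix x
  assume "x \<in> liminf_alg (sm, ip) Ms"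
  then obtain X where "bop x" "\<And>k. X k \<in> Ms k" "strong_star_lim (sm, ip) X x"
    by (auto simp: liminf_alg_def)
  then show "x \<in> M"
    using vN_strong_limit[OF vN_M, of x X] assms by (auto simp: strong_star_lim_def)
qed

theorem cond_exp_strong_star_lim:
  assumes "\<And>k. vN (Ms k)" "\<And>k. Ms k \<subseteq> M"
    and "\<And>k. cexp M (Ms k) (E k)" "\<And>k. trace_preserving M \<tau> (E k)"
    and x: "x \<in> liminf_alg (sm, ip) Ms"
  shows "strong_star_lim (sm, ip) (\<lambda>k. E k x) x"
proof -
  obtain X where "bop x" and X: "\<And>k. X k \<in> Ms k" and lim_X: "\<And>h. (\<lambda>k. nrm (X k h - x h)) \<longlonglongrightarrow> 0"
    using x by (auto simp: liminf_alg_def strong_star_lim_def)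
  have "x \<in> M"
    using liminf_alg_subset assms(2) x by blast
  obtain C where "C \<ge> 0" and C: "\<And>h. nrm (x h) \<le> C * nrm h"
    using bop_bound[OF \<open>bop x\<close>] by blast
  define z where "z k = op_diff (E k x) x" for k
  have "E k x \<in> M" for k
    using assms(2,3) \<open>x \<in> M\<close> cond_exp_in by blast
  then have "z k \<in> M" for k
    using vN_M \<open>x \<in> M\<close> by (simp add: z_def vN_diff)
  have z_bound: "nrm (z k h) \<le> (9 * C) * nrm h" for k h
    using nrm_diff_le[of "E k x h" "x h"] C[of h]
      cond_exp_nrm_le[OF vN_M assms(1)[of k] assms(3)[of k] \<open>x \<in> M\<close> C, of h]
    by (simp add: z_def op_diff_def)
  have "(\<lambda>k. nrm (z k \<xi>)) \<longlonglongrightarrow> 0"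
  proof (rule tendsto_sandwich[of "\<lambda>k. 0" _ _ "\<lambda>k. 2 * nrm (X k \<xi> - x \<xi>)"])
    show "\<forall>\<^sub>F k in sequentially. nrm (z k \<xi>) \<le> 2 * nrm (X k \<xi> - x \<xi>)"
      using cond_exp_cyclic_approx[OF assms(1-4) \<open>x \<in> M\<close> X] by (simp add: z_def op_diff_def)
    show "(\<lambda>k. 2 * nrm (X k \<xi> - x \<xi>)) \<longlonglongrightarrow> 0"
      using tendsto_mult_right_zero[OF lim_X] by simp
  qed auto
  then have "(\<lambda>k. nrm (z k h)) \<longlonglongrightarrow> 0" for h
    using tendsto_zero_of_adj_cyclic[OF \<open>z _ \<in> M\<close> _ z_bound] nrm_adj_cyclic[OF \<open>z _ \<in> M\<close>] \<open>C \<ge> 0\<close>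
    by simp
  moreover have "(\<lambda>k. nrm (adjo (z k) h)) \<longlonglongrightarrow> 0" for h
  proof (rule tendsto_zero_of_adj_cyclic)
    show "adjo (z k) \<in> M" "nrm (adjo (z k) h) \<le> (9 * C) * nrm h" for k h
      using vN_M \<open>z k \<in> M\<close> \<open>C \<ge> 0\<close> by (simp_all add: vN_adj vN_bop nrm_adj_le z_bound)
    show "(\<lambda>k. nrm (adjo (adjo (z k)) \<xi>)) \<longlonglongrightarrow> 0"
      using \<open>(\<lambda>k. nrm (z k \<xi>)) \<longlonglongrightarrow> 0\<close> vN_M \<open>z _ \<in> M\<close> by (simp add: vN_bop adj_adj)
  qed (use \<open>C \<ge> 0\<close> in simp)
  moreover have "adjo (z k) = op_diff (adjo (E k x)) (adjo x)" for k
    using adj_diff vN_bop vN_M \<open>E k x \<in> M\<close> \<open>bop x\<close> by (simp add: z_def)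
  ultimately show ?thesis
    by (simp add: strong_star_lim_def z_def op_diff_def)
qed

end

lemma hspace_if_hilbert_space: "hilbert_space (sm, ip) \<Longrightarrow> hspace sm ip"
  unfolding hilbert_space_def Let_def fst_conv snd_conv hspace_def
  by (elim conjE, intro conjI) blast+

theorem lemma3p2:
  fixes S :: "('h::ab_group_add) hsp"
    and M :: "('h \<Rightarrow> 'h) set"
    and \<tau> :: "('h \<Rightarrow> 'h) \<Rightarrow> complex"
    and Ms :: "nat \<Rightarrow> ('h \<Rightarrow> 'h) set"
    and E :: "nat \<Rightarrow> ('h \<Rightarrow> 'h) \<Rightarrow> ('h \<Rightarrow> 'h)"
    and x :: "'h \<Rightarrow> 'h"
  assumes "hilbert_space S"
    and "separable_hs S"
    and "II1_factor S M"
    and "state S M \<tau>" and "tracial S M \<tau>" and "faithful S M \<tau>" and "normal_functional S M \<tau>"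
    and "acts_standardly S M \<tau>"
    and "\<And>k. vN_algebra S (Ms k) \<and> Ms k \<subseteq> M"
    and "\<And>k. cond_exp S M (Ms k) (E k) \<and> normal_map S M (E k) \<and> trace_preserving M \<tau> (E k)"
    and "x \<in> liminf_alg S Ms"
  shows "strong_star_lim S (\<lambda>k. E k x) x"
proof -
  obtain sm ip where S: "S = (sm, ip)"
    by (cases S)
  then interpret hspace sm ip
    using assms(1) by (simp add: hspace_if_hilbert_space)
  obtain \<xi> where "\<And>h e. e > 0 \<Longrightarrow> \<exists>m\<in>M. nrm (m \<xi> - h) < e" "\<And>m. m \<in> M \<Longrightarrow> \<tau> m = ip (m \<xi>) \<xi>"
    using assms(8) S unfolding acts_standardly_def by auto
  moreover have "vN M"
    using assms(3) S by (simp add: II1_factor_def)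
  ultimately interpret standard_form sm ip M \<tau> \<xi>
    using assms(5) S by unfold_locales auto
  have "\<And>k. vN (Ms k)" "\<And>k. Ms k \<subseteq> M" "\<And>k. cexp M (Ms k) (E k)" "\<And>k. trace_preserving M \<tau> (E k)"
    using assms(9,10) S by simp_all
  from cond_exp_strong_star_lim[OF this] show ?thesis
    using assms(11) S by simp
qed

end
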